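(* Let $k$ be a complex number and $n$ a positive integer. Then \[ \sum_{\pi \in \mathcal{D}(n)} (-1)^{\#(\pi)-1} s(\pi)^k = \sum_{\pi \in \mathcal{P}(n)} \sum_{j=0}^{\nu_d(\pi)} (-1)^j \binom{\nu_d(\pi)}{j} \bigl(\ell(\pi)-j\bigr)^k, \] where any term with $\ell(\pi)-j=0$ is interpreted as $0$.
   Context: $\mathcal{P}(n)$ is the set of all partitions of $n$ and $\mathcal{D}(n)$ the set of partitions of $n$ into distinct parts. For a partition $\pi$: $s(\pi)$ is its smallest part, $\ell(\pi)$ its largest part, $\#(\pi)$ its number of parts, and $\nu_d(\pi)$ the number of distinct part sizes of $\pi$. For a positive integer $m$ and complex $k$, $m^k=e^{k\log m}$ with the real logarithm. *)

theory Defs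
  imports "HOL-Analysis.Analysis" "HOL-Library.Multiset"
begin

definition partitions :: "nat \<Rightarrow> nat multiset set" where
  "partitions n = {p. (\<forall>x \<in># p. x > 0) \<and> sum_mset p = n}"

definition distinct_partitions :: "nat \<Rightarrow> nat multiset set" where
  "distinct_partitions n = {p \<in> partitions n. \<forall>x. count p x \<le> 1}"

definition smallest_part :: "nat multiset \<Rightarrow> nat" where
  "smallest_part p = Min (set_mset p)"

definition largest_part :: "nat multiset \<Rightarrow> nat" where
  "largest_part p = Max (set_mset p)"

definition num_parts :: "nat multiset \<Rightarrow> nat" where
  "num_parts p = size p"

definition num_distinct_parts :: "nat multiset \<Rightarrow> nat" where
  "num_distinct_parts p = card (set_mset p)"

definition npow :: "nat \<Rightarrow> complex \<Rightarrow> complex" where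
  "npow m k = exp (k * of_real (ln (real m)))"

end

theory Submission
  imports Defs "HOL-Library.Disjoint_Sets"
begin

(*
  Conjugation of partitions exchanges the largest part with the number of parts and preserves
  the number of distinct part sizes, while the inner binomial sum runs over the subsets S of the
  distinct part sizes.  Removing one copy of each element of S from the partition turns the right
  side into a signed sum of (-1)^|S| F(#q) over pairs (q, S) of a partition q and a set S of
  distinct positive integers of total size n; conjugating q once more replaces #q by the largest
  part of q.  Moving the smallest "movable" integer between q and S (an element of S not
  exceeding the largest part of q, or a part of q other than a single copy of its largest part)
  is a sign-reversing involution that keeps the largest part of q.  Its fixed points with q
  nonempty are q = {m} with S above m, i.e. exactly the partitions {m} + S into distinct parts
  with smallest part m, and the pairs with q empty contribute F 0 = 0.
*)

lemma count_image_mset_mset_set: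
  "finite A \<Longrightarrow> count (image_mset g (mset_set A)) v = card {u\<in>A. g u = v}"
  by (simp add: count_image_mset Int_def) (metis (no_types, lifting) Collect_cong vimage_singleton_eq)

lemma sum_mset_mset_set: "finite S \<Longrightarrow> sum_mset (mset_set S) = \<Sum>S"
  by (simp add: sum_unfold_sum_mset)

lemma mset_set_subset_mset: "S \<subseteq> set_mset p \<Longrightarrow> mset_set S \<subseteq># p"
  by (meson finite_set_mset mset_set_set_mset_msubset subset_imp_msubset_mset_set
      subset_mset.order_trans)

lemma size_diff_mset_set: "S \<subseteq> set_mset p \<Longrightarrow> size (p - mset_set S) = size p - card S"
  by (simp add: size_Diff_submset mset_set_subset_mset)

lemma mset_set_set_mset_eq:
  assumes "\<And>x. count p x \<le> 1"
  shows "mset_set (set_mset p) = p"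
proof (rule multiset_eqI)
  fix x
  show "count (mset_set (set_mset p)) x = count p x"
  proof (cases "x \<in># p")
    case True
    then have "0 < count p x"
      by simp
    then have "count p x = 1"
      using assms[of x] by linarith
    then show ?thesis
      using True by simp
  qed (simp add: not_in_iff)
qed

lemma elem_le_sum_mset: "x \<in># p \<Longrightarrow> x \<le> sum_mset (p :: nat multiset)"
  by (induction p) auto

lemma size_le_sum_mset: "0 \<notin># p \<Longrightarrow> size p \<le> sum_mset p"
  by (induction p) (auto simp: Suc_le_eq)

lemma down_closed_eq_atLeastAtMost_card:
  assumes "finite B" "0 \<notin> B"
    and down_closed: "\<And>s t. t \<in> B \<Longrightarrow> 1 \<le> s \<Longrightarrow> s \<le> t \<Longrightarrow> s \<in> B"
  shows "B = {1..card B}"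
proof (cases "B = {}")
  case False
  have "B = {1..Max B}"
  proof
    show "B \<subseteq> {1..Max B}"
      using assms(1,2) by (auto simp: Suc_le_eq intro: gr0I)
    show "{1..Max B} \<subseteq> B"
      using down_closed Max_in[OF assms(1) False] by auto
  qed
  then show ?thesis
    by (metis card_atLeastAtMost diff_Suc_1)
qed simp

lemma Min_eq_if_smaller_in:
  assumes "finite C'" "i \<in> C'" "\<And>j. j \<in> C' \<Longrightarrow> j < i \<Longrightarrow> j \<in> C" "finite C" "i = Min C"
  shows "Min C' = i"
proof (rule Min_eqI)
  fix j assume "j \<in> C'"
  show "i \<le> j"
  proof (rule ccontr)
    assume "\<not> i \<le> j"
    then have "j \<in> C"
      using assms(3) \<open>j \<in> C'\<close> by simp
    then show False
      using \<open>\<not> i \<le> j\<close> assms(4,5) by simp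
  qed
qed (use assms in auto)

lemma sum_Pow_card:
  fixes h :: "nat \<Rightarrow> 'a :: comm_semiring_1"
  assumes "finite A"
  shows "(\<Sum>S\<in>Pow A. h (card S)) = (\<Sum>j=0..card A. of_nat (card A choose j) * h j)"
proof -
  have "(\<Sum>S\<in>Pow A. h (card S)) = (\<Sum>j=0..card A. \<Sum>S\<in>{S\<in>Pow A. card S = j}. h (card S))"
    using assms card_mono by (intro sum.group[symmetric]) fastforce+
  also have "\<dots> = (\<Sum>j=0..card A. of_nat (card A choose j) * h j)"
  proof (rule sum.cong)
    fix j
    have "{S\<in>Pow A. card S = j} = {S. S \<subseteq> A \<and> card S = j}"
      by auto
    then show "(\<Sum>S\<in>{S\<in>Pow A. card S = j}. h (card S)) = of_nat (card A choose j) * h j"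
      using n_subsets[OF assms] by simp
  qed simp
  finally show ?thesis .
qed

section \<open>Conjugate partitions\<close>

(* Unlike largest_part, this is 0 on the empty multiset. *)
definition max_part :: "nat multiset \<Rightarrow> nat" where
  "max_part p = Max (insert 0 (set_mset p))"

definition parts_ge :: "nat multiset \<Rightarrow> nat \<Rightarrow> nat" where
  "parts_ge p t = size {#x \<in># p. t \<le> x#}"

definition conjugate :: "nat multiset \<Rightarrow> nat multiset" where
  "conjugate p = image_mset (parts_ge p) (mset_set {1..max_part p})"

lemma max_part_ge: "x \<in># p \<Longrightarrow> x \<le> max_part p"
  unfolding max_part_def by simp

lemma max_part_in: "p \<noteq> {#} \<Longrightarrow> max_part p \<in># p"
  unfolding max_part_def
  by (metis Max_in finite_insert finite_set_mset insert_iff insert_not_empty Max_ge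
      set_mset_eq_empty_iff le_zero_eq neq0_conv)

lemma max_part_eqI: "m \<in># p \<Longrightarrow> (\<And>x. x \<in># p \<Longrightarrow> x \<le> m) \<Longrightarrow> max_part p = m"
  unfolding max_part_def by (intro Max_eqI) auto

lemma max_part_empty [simp]: "max_part {#} = 0"
  unfolding max_part_def by simp

lemma max_part_single [simp]: "max_part {#m#} = m"
  unfolding max_part_def by simp

lemma largest_part_eq_max_part: "p \<noteq> {#} \<Longrightarrow> largest_part p = max_part p"
  unfolding largest_part_def max_part_def
  by (metis Max_insert finite_set_mset max_0L set_mset_eq_empty_iff)

lemma card_set_mset_le_max_part: "0 \<notin># p \<Longrightarrow> card (set_mset p) \<le> max_part p"
proof -
  assume "0 \<notin># p"
  then have "set_mset p \<subseteq> {1..max_part p}"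
    using max_part_ge by (auto simp: Suc_le_eq intro: gr0I)
  then show ?thesis
    using card_mono[of "{1..max_part p}"] by simp
qed

lemma parts_ge_eq_0: "max_part p < t \<Longrightarrow> parts_ge p t = 0"
  unfolding parts_ge_def using max_part_ge by (force simp: filter_mset_eq_conv)

lemma parts_ge_antimono: "t \<le> t' \<Longrightarrow> parts_ge p t' \<le> parts_ge p t"
  unfolding parts_ge_def by (intro size_mset_mono filter_mset_mono_strong) auto

lemma parts_ge_eq_count_plus: "parts_ge p t = count p t + parts_ge p (Suc t)"
proof -
  have "{#x \<in># p. t \<le> x#} = {#x \<in># p. x = t#} + {#x \<in># p. Suc t \<le> x#}"
    by (induction p) auto
  then show ?thesis
    unfolding parts_ge_def by (simp add: filter_eq_replicate_mset)
qed

lemma parts_ge_1: "0 \<notin># p \<Longrightarrow> parts_ge p 1 = size p"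
  unfolding parts_ge_def by (metis One_nat_def Suc_leI filter_mset_True filter_mset_cong gr0I)

lemma parts_ge_add_mset [simp]:
  "parts_ge (add_mset x p) t = parts_ge p t + (if t \<le> x then 1 else 0)"
  unfolding parts_ge_def by auto

lemma sum_parts_ge:
  "(\<And>x. x \<in># p \<Longrightarrow> x \<le> N) \<Longrightarrow> (\<Sum>t=1..N. parts_ge p t) = sum_mset p"
proof (induction p)
  case empty
  then show ?case by (simp add: parts_ge_def)
next
  case (add x p)
  have "(\<Sum>t=1..N. if t \<le> x then 1 else 0::nat) = card ({1..N} \<inter> {..x})"
    by (simp add: sum.If_cases Int_def)
  also have "{1..N} \<inter> {..x} = {1..x}"
    using add.prems by auto
  finally show ?case
    using add by (simp add: sum.distrib)
qed

lemma parts_ge_strict_antimono_on_parts: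
  assumes "x \<in># p" "x < y"
  shows "parts_ge p y < parts_ge p x"
proof -
  have "parts_ge p y \<le> parts_ge p (Suc x)"
    using assms(2) by (intro parts_ge_antimono) simp
  moreover have "0 < count p x"
    using assms(1) by simp
  ultimately show ?thesis
    using parts_ge_eq_count_plus[of p x] by linarith
qed

lemma parts_ge_eq_at_part:
  assumes "1 \<le> t" "t \<le> max_part p"
  obtains x where "x \<in># p" "parts_ge p t = parts_ge p x"
proof -
  have "p \<noteq> {#}"
    using assms by auto
  define C where "C = {x \<in> set_mset p. t \<le> x}"
  have "max_part p \<in> C"
    using max_part_in[OF \<open>p \<noteq> {#}\<close>] assms unfolding C_def by auto
  then have x: "Min C \<in> C"
    unfolding C_def by (intro Min_in) auto
  have "t \<le> z \<longleftrightarrow> Min C \<le> z" if "z \<in># p" for z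
    using that x unfolding C_def by auto
  then have "parts_ge p t = parts_ge p (Min C)"
    unfolding parts_ge_def by (metis (no_types, lifting) filter_mset_cong)
  then show ?thesis
    using that x unfolding C_def by auto
qed

lemma set_mset_conjugate: "set_mset (conjugate p) = parts_ge p ` {1..max_part p}"
  unfolding conjugate_def by simp

lemma zero_not_in_conjugate: "0 \<notin># conjugate p"
proof
  assume "0 \<in># conjugate p"
  then obtain t where t: "1 \<le> t" "t \<le> max_part p" "parts_ge p t = 0"
    unfolding set_mset_conjugate by auto
  then have "max_part p \<in># p"
    by (intro max_part_in) auto
  then have "0 < parts_ge p (max_part p)"
    using parts_ge_eq_count_plus[of p "max_part p"] by simp
  also have "\<dots> \<le> parts_ge p t"
    using t by (intro parts_ge_antimono)
  finally show False
    using t by simp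
qed

lemma sum_mset_conjugate: "sum_mset (conjugate p) = sum_mset p"
proof -
  have "sum_mset (conjugate p) = (\<Sum>t=1..max_part p. parts_ge p t)"
    unfolding conjugate_def by (simp add: sum_unfold_sum_mset)
  also have "\<dots> = sum_mset p"
    by (rule sum_parts_ge) (rule max_part_ge)
  finally show ?thesis .
qed

lemma max_part_conjugate: "0 \<notin># p \<Longrightarrow> max_part (conjugate p) = size p"
proof (cases "p = {#}")
  case True
  then show ?thesis by (simp add: conjugate_def)
next
  case False
  assume p: "0 \<notin># p"
  have "1 \<le> max_part p"
    using max_part_in[OF False] p by (metis One_nat_def Suc_leI gr0I)
  then have "max_part (conjugate p) = parts_ge p 1"
    unfolding max_part_def set_mset_conjugate
    by (intro Max_eqI) (auto intro: parts_ge_antimono)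
  then show ?thesis
    using parts_ge_1[OF p] by simp
qed

lemma parts_ge_conjugate: "parts_ge (conjugate p) u = card {t\<in>{1..max_part p}. u \<le> parts_ge p t}"
  unfolding parts_ge_def conjugate_def by (simp add: image_mset_filter_mset_swap[symmetric])

lemma parts_ge_conjugate_eq_iff:
  assumes "1 \<le> u" "1 \<le> v"
  shows "parts_ge (conjugate p) u = v \<longleftrightarrow> parts_ge p (Suc v) < u \<and> u \<le> parts_ge p v"
proof -
  define B where "B = {t\<in>{1..max_part p}. u \<le> parts_ge p t}"
  define m where "m = card B"
  have mem_B: "t \<in> B \<longleftrightarrow> 1 \<le> t \<and> u \<le> parts_ge p t" for t
    using parts_ge_eq_0[of p t] assms unfolding B_def by (auto simp: not_less[symmetric])
  have "B = {1..m}"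
    unfolding m_def
  proof (rule down_closed_eq_atLeastAtMost_card)
    fix s t assume "t \<in> B" "1 \<le> s" "s \<le> t"
    then show "s \<in> B"
      using mem_B parts_ge_antimono[of s t p] by auto
  qed (auto simp: B_def)
  then have "v \<le> m \<longleftrightarrow> u \<le> parts_ge p v" "Suc v \<le> m \<longleftrightarrow> u \<le> parts_ge p (Suc v)"
    using mem_B[of v] mem_B[of "Suc v"] assms by auto
  moreover have "parts_ge (conjugate p) u = m"
    unfolding parts_ge_conjugate m_def B_def ..
  ultimately show ?thesis
    by auto
qed

lemma conjugate_conjugate: "0 \<notin># p \<Longrightarrow> conjugate (conjugate p) = p"
proof (rule multiset_eqI)
  fix v assume p: "0 \<notin># p"
  show "count (conjugate (conjugate p)) v = count p v"
  proof (cases "v = 0")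
    case True
    then show ?thesis
      using zero_not_in_conjugate p by (metis count_eq_zero_iff)
  next
    case False
    have "parts_ge p v \<le> size p"
      using parts_ge_antimono[of 1 v p] parts_ge_1[OF p] False by simp
    have "{u\<in>{1..size p}. parts_ge (conjugate p) u = v} = {Suc (parts_ge p (Suc v))..parts_ge p v}"
    proof (rule set_eqI)
      fix u
      show "u \<in> {u\<in>{1..size p}. parts_ge (conjugate p) u = v} \<longleftrightarrow>
            u \<in> {Suc (parts_ge p (Suc v))..parts_ge p v}"
      proof (cases "1 \<le> u")
        case True
        then show ?thesis
          using parts_ge_conjugate_eq_iff[OF True, of v p] False \<open>parts_ge p v \<le> size p\<close>
          by auto
      qed auto
    qed
    then have "count (conjugate (conjugate p)) v = card {Suc (parts_ge p (Suc v))..parts_ge p v}"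
      unfolding conjugate_def[of "conjugate p"] max_part_conjugate[OF p]
      by (simp add: count_image_mset_mset_set)
    also have "\<dots> = count p v"
      using parts_ge_eq_count_plus[of p v] by simp
    finally show ?thesis .
  qed
qed

lemma card_set_mset_conjugate: "0 \<notin># p \<Longrightarrow> card (set_mset (conjugate p)) = card (set_mset p)"
proof -
  assume p: "0 \<notin># p"
  have "inj_on (parts_ge p) (set_mset p)"
    by (rule inj_onI) (metis nat_neq_iff parts_ge_strict_antimono_on_parts less_irrefl)
  moreover have "parts_ge p ` {1..max_part p} = parts_ge p ` set_mset p"
  proof
    have "set_mset p \<subseteq> {1..max_part p}"
      using p max_part_ge by (auto simp: Suc_le_eq intro: gr0I)
    then show "parts_ge p ` set_mset p \<subseteq> parts_ge p ` {1..max_part p}"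
      by (rule image_mono)
    show "parts_ge p ` {1..max_part p} \<subseteq> parts_ge p ` set_mset p"
    proof
      fix y assume "y \<in> parts_ge p ` {1..max_part p}"
      then obtain t where t: "1 \<le> t" "t \<le> max_part p" "y = parts_ge p t"
        by auto
      obtain x where "x \<in># p" "parts_ge p t = parts_ge p x"
        by (rule parts_ge_eq_at_part[OF t(1,2)])
      then show "y \<in> parts_ge p ` set_mset p"
        using t(3) by auto
    qed
  qed
  ultimately show ?thesis
    unfolding set_mset_conjugate by (simp add: card_image)
qed

section \<open>Sums over partitions and over pairs of a partition and a set\<close>

lemma mem_partitions_iff: "p \<in> partitions n \<longleftrightarrow> 0 \<notin># p \<and> sum_mset p = n"
  unfolding partitions_def by (auto intro: gr0I)

lemma finite_partitions: "finite (partitions n)"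
proof (rule finite_subset)
  show "partitions n \<subseteq> (\<Union>s\<le>n. multisets_of_size {1..n} s)"
  proof
    fix p assume "p \<in> partitions n"
    then have p: "0 \<notin># p" "sum_mset p = n"
      by (auto simp: mem_partitions_iff)
    then have "set_mset p \<subseteq> {1..n}"
      using elem_le_sum_mset by (auto simp: Suc_le_eq intro: gr0I)
    moreover have "size p \<le> n"
      using size_le_sum_mset[OF p(1)] p(2) by simp
    ultimately show "p \<in> (\<Union>s\<le>n. multisets_of_size {1..n} s)"
      by (auto simp: multisets_of_size_def)
  qed
qed auto

lemma bij_betw_conjugate_partitions: "bij_betw conjugate (partitions n) (partitions n)"
  by (rule bij_betw_byWitness[where f' = conjugate])
     (auto simp: mem_partitions_iff conjugate_conjugate zero_not_in_conjugate sum_mset_conjugate)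

lemma sum_partitions_conjugate: "(\<Sum>p\<in>partitions n. g (conjugate p)) = (\<Sum>p\<in>partitions n. g p)"
  using sum.reindex_bij_betw[OF bij_betw_conjugate_partitions] .

definition partition_pairs :: "nat \<Rightarrow> (nat multiset \<times> nat set) set" where
  "partition_pairs n = {(q, S). 0 \<notin># q \<and> finite S \<and> 0 \<notin> S \<and> sum_mset q + \<Sum>S = n}"

lemma finite_partition_pairs: "finite (partition_pairs n)"
proof (rule finite_subset)
  show "partition_pairs n \<subseteq> (\<Union>a\<le>n. partitions a) \<times> Pow {..n}"
  proof
    fix x assume "x \<in> partition_pairs n"
    then obtain q S where x: "x = (q, S)" "0 \<notin># q" "finite S" "sum_mset q + \<Sum>S = n"
      unfolding partition_pairs_def by auto
    have "S \<subseteq> {..n}"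
      using member_le_sum[of _ S id] x(3,4) by fastforce
    moreover have "q \<in> partitions (sum_mset q)"
      using x(2) by (simp add: mem_partitions_iff)
    ultimately show "x \<in> (\<Union>a\<le>n. partitions a) \<times> Pow {..n}"
      using x(1,4) by auto
  qed
qed (simp add: finite_partitions)

lemma sum_partition_pairs_conjugate:
  "(\<Sum>(q, S)\<in>partition_pairs n. g (conjugate q) S) = (\<Sum>(q, S)\<in>partition_pairs n. g q S)"
  by (rule sum.reindex_bij_witness[where i = "map_prod conjugate id" and j = "map_prod conjugate id"])
     (auto simp: partition_pairs_def conjugate_conjugate zero_not_in_conjugate sum_mset_conjugate)

lemma sum_partitions_Pow_set_mset:
  "(\<Sum>p\<in>partitions n. \<Sum>S\<in>Pow (set_mset p). g (p - mset_set S) S)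
    = (\<Sum>(q, S)\<in>partition_pairs n. g q S)"
proof -
  have "(\<Sum>p\<in>partitions n. \<Sum>S\<in>Pow (set_mset p). g (p - mset_set S) S)
      = (\<Sum>(p, S)\<in>Sigma (partitions n) (\<lambda>p. Pow (set_mset p)). g (p - mset_set S) S)"
    by (rule sum.Sigma) (auto simp: finite_partitions)
  also have "\<dots> = (\<Sum>(q, S)\<in>partition_pairs n. g q S)"
  proof (rule sum.reindex_bij_witness[where j = "\<lambda>(p, S). (p - mset_set S, S)"
                                       and i = "\<lambda>(q, S). (q + mset_set S, S)"])
    fix x assume "x \<in> Sigma (partitions n) (\<lambda>p. Pow (set_mset p))"
    then obtain p S where x: "x = (p, S)" "0 \<notin># p" "sum_mset p = n" "S \<subseteq> set_mset p"
      by (auto simp: mem_partitions_iff)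
    then have "finite S"
      by (simp add: finite_subset)
    have p_eq: "p = (p - mset_set S) + mset_set S"
      using mset_set_subset_mset[OF x(4)] by (simp add: subset_mset.diff_add)
    show "(\<lambda>(q, S). (q + mset_set S, S)) ((\<lambda>(p, S). (p - mset_set S, S)) x) = x"
      using x(1) p_eq by simp
    have "sum_mset (p - mset_set S) + \<Sum>S = n"
      using arg_cong[OF p_eq, of sum_mset] x(3) sum_mset_mset_set[OF \<open>finite S\<close>] by simp
    then show "(\<lambda>(p, S). (p - mset_set S, S)) x \<in> partition_pairs n"
      using x \<open>finite S\<close> by (auto simp: partition_pairs_def dest: in_diffD)
  next
    fix y assume "y \<in> partition_pairs n"
    then obtain q S where y: "y = (q, S)" "0 \<notin># q" "finite S" "0 \<notin> S" "sum_mset q + \<Sum>S = n"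
      unfolding partition_pairs_def by auto
    show "(\<lambda>(p, S). (p - mset_set S, S)) ((\<lambda>(q, S). (q + mset_set S, S)) y) = y"
      using y(1) by simp
    show "(\<lambda>(q, S). (q + mset_set S, S)) y \<in> Sigma (partitions n) (\<lambda>p. Pow (set_mset p))"
      using y by (auto simp: mem_partitions_iff sum_mset_mset_set)
  qed (simp add: case_prod_beta)
  finally show ?thesis .
qed

section \<open>A sign-reversing involution on pairs\<close>

(* The integers that can be moved between q and S without changing max_part q. *)
definition movable :: "nat multiset \<Rightarrow> nat set \<Rightarrow> nat set" where
  "movable q S = {i. (i \<in> S \<and> i \<le> max_part q) \<or> (i \<in># q \<and> i < max_part q)
                     \<or> (i = max_part q \<and> 2 \<le> count q i)}"

definition toggle :: "nat multiset \<times> nat set \<Rightarrow> nat multiset \<times> nat set" where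
  "toggle = (\<lambda>(q, S). let i = Min (movable q S) in
     if i \<in> S then (add_mset i q, S - {i}) else (q - {#i#}, insert i S))"

lemma finite_movable: "finite (movable q S)"
  by (rule finite_subset[of _ "{..max_part q}"]) (auto simp: movable_def)

lemma toggle_move_into_parts:
  assumes "(q, S) \<in> partition_pairs n" "q \<noteq> {#}" "movable q S \<noteq> {}"
    and i: "i = Min (movable q S)" "i \<in> S"
  shows "toggle (q, S) = (add_mset i q, S - {i})"
    and "toggle (add_mset i q, S - {i}) = (q, S)"
    and "(add_mset i q, S - {i}) \<in> partition_pairs n"
    and "max_part (add_mset i q) = max_part q"
    and "movable (add_mset i q) (S - {i}) \<noteq> {}"
proof -
  have q: "0 \<notin># q" "finite S" "0 \<notin> S" "sum_mset q + \<Sum>S = n"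
    using assms(1) by (auto simp: partition_pairs_def)
  have "i \<in> movable q S"
    using i(1) finite_movable assms(3) by simp
  then have "i \<le> max_part q"
    unfolding movable_def by auto
  then show max_part: "max_part (add_mset i q) = max_part q"
    using max_part_in[OF assms(2)] max_part_ge by (intro max_part_eqI) auto
  have "i \<in> movable (add_mset i q) (S - {i})"
    using \<open>i \<le> max_part q\<close> max_part_in[OF assms(2)] unfolding movable_def max_part
    by (cases "i < max_part q") auto
  then show "movable (add_mset i q) (S - {i}) \<noteq> {}"
    by auto
  have "j \<in> movable q S" if "j \<in> movable (add_mset i q) (S - {i})" "j < i" for j
    using that \<open>i \<le> max_part q\<close> unfolding movable_def max_part by auto
  then have "Min (movable (add_mset i q) (S - {i})) = i"
    using Min_eq_if_smaller_in[OF finite_movable \<open>i \<in> movable (add_mset i q) (S - {i})\<close>]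
      finite_movable i(1) by blast
  then show "toggle (add_mset i q, S - {i}) = (q, S)"
    using i(2) unfolding toggle_def by (simp add: Let_def insert_absorb)
  show "toggle (q, S) = (add_mset i q, S - {i})"
    using i unfolding toggle_def by (simp add: Let_def)
  have "\<Sum>S = i + \<Sum>(S - {i})"
    using i(2) q(2) by (simp add: sum.remove)
  moreover have "0 < i"
    using q(3) i(2) by (auto intro: gr0I)
  ultimately show "(add_mset i q, S - {i}) \<in> partition_pairs n"
    using q i(2) by (auto simp: partition_pairs_def)
qed

lemma toggle_move_into_set:
  assumes "(q, S) \<in> partition_pairs n" "q \<noteq> {#}" "movable q S \<noteq> {}"
    and i: "i = Min (movable q S)" "i \<notin> S"
  shows "toggle (q, S) = (q - {#i#}, insert i S)"
    and "toggle (q - {#i#}, insert i S) = (q, S)"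
    and "(q - {#i#}, insert i S) \<in> partition_pairs n"
    and "max_part (q - {#i#}) = max_part q"
    and "q - {#i#} \<noteq> {#}"
    and "movable (q - {#i#}) (insert i S) \<noteq> {}"
proof -
  have q: "0 \<notin># q" "finite S" "0 \<notin> S" "sum_mset q + \<Sum>S = n"
    using assms(1) by (auto simp: partition_pairs_def)
  have "i \<in> movable q S"
    using i(1) finite_movable assms(3) by simp
  then have i_cases: "(i \<in># q \<and> i < max_part q) \<or> (i = max_part q \<and> 2 \<le> count q i)"
    using i(2) unfolding movable_def by auto
  then have "0 < count q i"
    using max_part_in[OF assms(2)] by auto
  then have "i \<in># q"
    by simp
  have max_in: "max_part q \<in># q - {#i#}"
    using i_cases max_part_in[OF assms(2)] by (auto simp: in_diff_count)
  then show "q - {#i#} \<noteq> {#}"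
    by auto
  show max_part: "max_part (q - {#i#}) = max_part q"
    using max_in max_part_ge by (intro max_part_eqI) (auto dest: in_diffD)
  have "i \<in> movable (q - {#i#}) (insert i S)"
    using \<open>i \<in># q\<close> max_part_ge unfolding movable_def max_part by auto
  then show "movable (q - {#i#}) (insert i S) \<noteq> {}"
    by auto
  have "j \<in> movable q S" if "j \<in> movable (q - {#i#}) (insert i S)" "j < i" for j
    using that unfolding movable_def max_part
    by (auto dest: in_diffD)
  then have "Min (movable (q - {#i#}) (insert i S)) = i"
    using Min_eq_if_smaller_in[OF finite_movable \<open>i \<in> movable (q - {#i#}) (insert i S)\<close>]
      finite_movable i(1) by blast
  then show "toggle (q - {#i#}, insert i S) = (q, S)"
    using i(2) \<open>i \<in># q\<close> unfolding toggle_def by (simp add: Let_def)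
  show "toggle (q, S) = (q - {#i#}, insert i S)"
    using i unfolding toggle_def by (simp add: Let_def)
  have "sum_mset q = i + sum_mset (q - {#i#})"
    using \<open>i \<in># q\<close> by (metis insert_DiffM sum_mset.add_mset)
  moreover have "0 \<notin># q - {#i#}" "i \<noteq> 0"
    using q(1) \<open>i \<in># q\<close> by (auto dest: in_diffD intro: gr0I)
  ultimately show "(q - {#i#}, insert i S) \<in> partition_pairs n"
    using q i(2) by (simp add: partition_pairs_def)
qed

lemma toggle_involution:
  assumes "(q, S) \<in> partition_pairs n" "q \<noteq> {#}" "movable q S \<noteq> {}"
  obtains q' S' where "toggle (q, S) = (q', S')" "toggle (q', S') = (q, S)"
    "(q', S') \<in> partition_pairs n" "q' \<noteq> {#}" "movable q' S' \<noteq> {}" "max_part q' = max_part q"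
    "card S' = Suc (card S) \<or> card S = Suc (card S')"
proof -
  have "finite S"
    using assms(1) by (simp add: partition_pairs_def)
  show ?thesis
  proof (cases "Min (movable q S) \<in> S")
    case True
    have "card S = Suc (card (S - {Min (movable q S)}))"
      using card_Suc_Diff1[OF \<open>finite S\<close> True] by (rule sym)
    then show ?thesis
      using toggle_move_into_parts[OF assms refl True]
      by (intro that[of "add_mset (Min (movable q S)) q" "S - {Min (movable q S)}"]) auto
  next
    case False
    then have "card (insert (Min (movable q S)) S) = Suc (card S)"
      using \<open>finite S\<close> by simp
    then show ?thesis
      using toggle_move_into_set[OF assms refl False]
      by (intro that[of "q - {#Min (movable q S)#}" "insert (Min (movable q S)) S"]) auto
  qed
qed

lemma sum_movable_nonempty_eq_0:
  fixes F :: "nat \<Rightarrow> 'a :: ring_1"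
  shows "(\<Sum>(q, S)\<in>{(q, S)\<in>partition_pairs n. q \<noteq> {#} \<and> movable q S \<noteq> {}}.
            (-1)^card S * F (max_part q)) = 0"
proof (rule sum_involution_eq_0[where h = toggle])
  fix x assume "x \<in> {(q, S)\<in>partition_pairs n. q \<noteq> {#} \<and> movable q S \<noteq> {}}"
  then obtain q S where x: "x = (q, S)" "(q, S) \<in> partition_pairs n" "q \<noteq> {#}" "movable q S \<noteq> {}"
    by auto
  obtain q' S' where t: "toggle (q, S) = (q', S')" "toggle (q', S') = (q, S)"
    "(q', S') \<in> partition_pairs n" "q' \<noteq> {#}" "movable q' S' \<noteq> {}" "max_part q' = max_part q"
    "card S' = Suc (card S) \<or> card S = Suc (card S')"
    by (rule toggle_involution[OF x(2-4)])
  show "(case toggle x of (q, S) \<Rightarrow> (-1)^card S * F (max_part q)) +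
        (case x of (q, S) \<Rightarrow> (-1)^card S * F (max_part q)) = 0"
    using x(1) t(1,6,7) by auto
  show "toggle x \<in> {(q, S)\<in>partition_pairs n. q \<noteq> {#} \<and> movable q S \<noteq> {}}"
    using x(1) t(1,3-5) by simp
  show "toggle (toggle x) = x"
    using x(1) t(1,2) by simp
  show "toggle x \<noteq> x"
    using x(1) t(1,7) by auto
qed

lemma movable_empty:
  assumes "q \<noteq> {#}" "movable q S = {}"
  shows "q = {#max_part q#}" and "\<forall>s\<in>S. max_part q < s"
proof -
  have "x = max_part q" if "x \<in># q" for x
    using that assms(2) max_part_ge[OF that] unfolding movable_def by fastforce
  moreover have "count q (max_part q) = 1"
  proof -
    have "max_part q \<notin> movable q S"
      using assms(2) by simp
    then have "count q (max_part q) < 2"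
      unfolding movable_def by simp
    moreover have "0 < count q (max_part q)"
      using max_part_in[OF assms(1)] by simp
    ultimately show ?thesis
      by linarith
  qed
  ultimately show "q = {#max_part q#}"
    by (intro multiset_eqI) (metis count_single count_eq_zero_iff)
  show "\<forall>s\<in>S. max_part q < s"
    using assms(2) unfolding movable_def by fastforce
qed

lemma movable_single_eq_empty: "\<forall>s\<in>S. m < s \<Longrightarrow> movable {#m#} S = {}"
  unfolding movable_def by auto

lemma add_mset_mset_set_in_distinct_partitions:
  assumes "({#m#}, S) \<in> partition_pairs n" "\<forall>s\<in>S. m < s"
  shows "add_mset m (mset_set S) \<in> distinct_partitions n"
proof -
  have S: "0 \<notin># {#m#}" "finite S" "0 \<notin> S" "m + \<Sum>S = n"
    using assms(1) by (auto simp: partition_pairs_def)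
  have "count (add_mset m (mset_set S)) y \<le> 1" for y
    using assms(2) S(2) by (auto simp: count_mset_set')
  moreover have "sum_mset (add_mset m (mset_set S)) = n"
    using S(4) sum_mset_mset_set[OF S(2)] by simp
  ultimately show ?thesis
    using S(1-3) by (auto simp: distinct_partitions_def mem_partitions_iff)
qed

lemma distinct_partition_split_Min:
  assumes "p \<in> distinct_partitions n" "n > 0"
  defines "m \<equiv> Min (set_mset p)"
  shows "({#m#}, set_mset p - {m}) \<in> partition_pairs n"
    and "\<forall>s\<in>set_mset p - {m}. m < s"
    and "add_mset m (mset_set (set_mset p - {m})) = p"
proof -
  have p: "0 \<notin># p" "sum_mset p = n" "\<And>x. count p x \<le> 1"
    using assms(1) by (auto simp: distinct_partitions_def mem_partitions_iff)
  then have "p \<noteq> {#}"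
    using assms(2) by auto
  then have "m \<in># p"
    unfolding m_def by simp
  show "\<forall>s\<in>set_mset p - {m}. m < s"
    unfolding m_def by (auto simp: order.strict_iff_order)
  show p_eq: "add_mset m (mset_set (set_mset p - {m})) = p"
    using mset_set_set_mset_eq[OF p(3)] \<open>m \<in># p\<close> by (simp add: mset_set.remove)
  have "m + \<Sum>(set_mset p - {m}) = n"
    using p(2) arg_cong[OF p_eq, of sum_mset] by (simp add: sum_mset_mset_set)
  then show "({#m#}, set_mset p - {m}) \<in> partition_pairs n"
    using p(1) \<open>m \<in># p\<close> by (auto simp: partition_pairs_def intro: gr0I)
qed

lemma sum_movable_empty:
  fixes F :: "nat \<Rightarrow> 'a :: ring_1"
  assumes "n > 0"
  shows "(\<Sum>(q, S)\<in>{(q, S)\<in>partition_pairs n. q \<noteq> {#} \<and> movable q S = {}}.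
            (-1)^card S * F (max_part q))
       = (\<Sum>p\<in>distinct_partitions n. (-1)^(size p - 1) * F (Min (set_mset p)))"
proof (rule sum.reindex_bij_witness[where j = "\<lambda>(q, S). q + mset_set S"
      and i = "\<lambda>p. ({#Min (set_mset p)#}, set_mset p - {Min (set_mset p)})"])
  fix x assume "x \<in> {(q, S)\<in>partition_pairs n. q \<noteq> {#} \<and> movable q S = {}}"
  then obtain q S where x: "x = (q, S)" "(q, S) \<in> partition_pairs n" "q \<noteq> {#}" "movable q S = {}"
    by auto
  define m where "m = max_part q"
  have q_eq: "q = {#m#}" and gt: "\<forall>s\<in>S. m < s"
    using movable_empty[OF x(3,4), folded m_def] by blast+
  have "finite S"
    using x(2) by (simp add: partition_pairs_def)
  then have min: "Min (insert m S) = m" and "m \<notin> S"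
    using gt by (auto intro: Min_eqI simp: less_imp_le)
  then show "(\<lambda>p. ({#Min (set_mset p)#}, set_mset p - {Min (set_mset p)})) ((\<lambda>(q, S). q + mset_set S) x) = x"
    using x(1) q_eq \<open>finite S\<close> by simp
  show "(\<lambda>(q, S). q + mset_set S) x \<in> distinct_partitions n"
    using add_mset_mset_set_in_distinct_partitions[of m S n] x(1,2) q_eq gt by simp
  show "(-1)^(size ((\<lambda>(q, S). q + mset_set S) x) - 1) * F (Min (set_mset ((\<lambda>(q, S). q + mset_set S) x)))
      = (\<lambda>(q, S). (-1)^card S * F (max_part q)) x"
    using x(1) q_eq min \<open>finite S\<close> by simp
next
  fix p assume "p \<in> distinct_partitions n"
  from distinct_partition_split_Min[OF this assms]
  show "(\<lambda>(q, S). q + mset_set S) ((\<lambda>p. ({#Min (set_mset p)#}, set_mset p - {Min (set_mset p)})) p) = p"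
    and "(\<lambda>p. ({#Min (set_mset p)#}, set_mset p - {Min (set_mset p)})) p
      \<in> {(q, S)\<in>partition_pairs n. q \<noteq> {#} \<and> movable q S = {}}"
    by (auto simp: movable_single_eq_empty)
qed

lemma sum_partition_pairs_sign_max_part:
  fixes F :: "nat \<Rightarrow> 'a :: ring_1"
  assumes "F 0 = 0" "n > 0"
  shows "(\<Sum>(q, S)\<in>partition_pairs n. (-1)^card S * F (max_part q))
       = (\<Sum>p\<in>distinct_partitions n. (-1)^(size p - 1) * F (Min (set_mset p)))"
proof -
  let ?f = "\<lambda>(q, S). (-1)^card S * F (max_part q)"
  let ?D = "{(q, S)\<in>partition_pairs n. q \<noteq> {#} \<and> movable q S \<noteq> {}}"
  let ?E = "{(q, S)\<in>partition_pairs n. q \<noteq> {#} \<and> movable q S = {}}"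
  have "(\<Sum>x\<in>partition_pairs n. ?f x) = (\<Sum>x\<in>?D \<union> ?E. ?f x)"
    using assms(1) by (intro sum.mono_neutral_right finite_partition_pairs) auto
  also have "\<dots> = (\<Sum>x\<in>?D. ?f x) + (\<Sum>x\<in>?E. ?f x)"
    by (intro sum.union_disjoint) (auto intro: finite_subset[OF _ finite_partition_pairs])
  also have "\<dots> = 0 + (\<Sum>p\<in>distinct_partitions n. (-1)^(size p - 1) * F (Min (set_mset p)))"
    by (simp only: sum_movable_nonempty_eq_0 sum_movable_empty[OF assms(2)])
  finally show ?thesis
    by simp
qed

theorem sum_distinct_partitions_eq_sum_partitions_binomial:
  fixes F :: "nat \<Rightarrow> 'a :: comm_ring_1"
  assumes "F 0 = 0" "n > 0"
  shows "(\<Sum>p\<in>distinct_partitions n. (-1)^(size p - 1) * F (Min (set_mset p)))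
       = (\<Sum>p\<in>partitions n. \<Sum>j=0..card (set_mset p).
            (-1)^j * of_nat (card (set_mset p) choose j) * F (max_part p - j))"
proof -
  define B where "B a b = (\<Sum>j=0..b. (-1)^j * of_nat (b choose j) * F (a - j))" for a b
  have "(\<Sum>p\<in>partitions n. B (max_part p) (card (set_mset p)))
      = (\<Sum>p\<in>partitions n. B (max_part (conjugate p)) (card (set_mset (conjugate p))))"
    by (rule sum_partitions_conjugate[symmetric])
  also have "\<dots> = (\<Sum>p\<in>partitions n. B (size p) (card (set_mset p)))"
    by (intro sum.cong) (simp_all add: mem_partitions_iff max_part_conjugate card_set_mset_conjugate)
  also have "\<dots> = (\<Sum>p\<in>partitions n. \<Sum>S\<in>Pow (set_mset p). (-1)^card S * F (size (p - mset_set S)))"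
  proof (rule sum.cong)
    fix p
    have "(\<Sum>S\<in>Pow (set_mset p). (-1)^card S * F (size (p - mset_set S)))
        = (\<Sum>S\<in>Pow (set_mset p). (-1)^card S * F (size p - card S))"
      by (intro sum.cong) (auto simp: size_diff_mset_set)
    also have "\<dots> = B (size p) (card (set_mset p))"
      unfolding B_def using sum_Pow_card[of "set_mset p" "\<lambda>j. (-1)^j * F (size p - j)"]
      by (simp add: mult_ac)
    finally show "B (size p) (card (set_mset p))
        = (\<Sum>S\<in>Pow (set_mset p). (-1)^card S * F (size (p - mset_set S)))" ..
  qed simp
  also have "\<dots> = (\<Sum>(q, S)\<in>partition_pairs n. (-1)^card S * F (size q))"
    by (rule sum_partitions_Pow_set_mset)
  also have "\<dots> = (\<Sum>(q, S)\<in>partition_pairs n. (-1)^card S * F (max_part (conjugate q)))"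
    by (intro sum.cong) (auto simp: partition_pairs_def max_part_conjugate)
  also have "\<dots> = (\<Sum>(q, S)\<in>partition_pairs n. (-1)^card S * F (max_part q))"
    by (rule sum_partition_pairs_conjugate)
  finally show ?thesis
    using sum_partition_pairs_sign_max_part[of F n, OF assms] unfolding B_def by simp
qed

definition npow0 :: "nat \<Rightarrow> complex \<Rightarrow> complex" where
  "npow0 m k = (if m = 0 then 0 else npow m k)"

lemma npow_smallest_part:
  assumes "p \<in> distinct_partitions n" "n > 0"
  shows "npow (smallest_part p) k = npow0 (Min (set_mset p)) k"
proof -
  have "p \<noteq> {#}" "0 \<notin># p"
    using assms by (auto simp: distinct_partitions_def mem_partitions_iff intro: gr0I)
  then have "Min (set_mset p) \<in># p"
    by simp
  then have "Min (set_mset p) \<noteq> 0"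
    using \<open>0 \<notin># p\<close> by metis
  then show ?thesis
    unfolding npow0_def smallest_part_def by simp
qed

lemma npow_largest_part_minus:
  assumes "p \<in> partitions n" "n > 0" "j \<le> card (set_mset p)"
  shows "(if int (largest_part p) - int j = 0 then 0 else npow (nat (int (largest_part p) - int j)) k)
       = npow0 (max_part p - j) k"
proof -
  have "p \<noteq> {#}" "0 \<notin># p"
    using assms(1,2) by (auto simp: mem_partitions_iff)
  then have "j \<le> max_part p"
    using assms(3) card_set_mset_le_max_part[of p] by linarith
  then have "int (largest_part p) - int j = 0 \<longleftrightarrow> max_part p - j = 0"
    and "nat (int (largest_part p) - int j) = max_part p - j"
    using largest_part_eq_max_part[OF \<open>p \<noteq> {#}\<close>] by auto
  then show ?thesis
    unfolding npow0_def by (simp only:)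
qed

theorem corollary2p4:
  fixes k :: complex and n :: nat
  assumes "n > 0"
  shows "(\<Sum>p\<in>distinct_partitions n. (-1) ^ (num_parts p - 1) * npow (smallest_part p) k)
       = (\<Sum>p\<in>partitions n. \<Sum>j=0..num_distinct_parts p.
            (-1) ^ j * of_nat (num_distinct_parts p choose j) *
            (if int (largest_part p) - int j = 0 then 0
             else npow (nat (int (largest_part p) - int j)) k))"
proof -
  have "(\<Sum>p\<in>distinct_partitions n. (-1) ^ (num_parts p - 1) * npow (smallest_part p) k)
      = (\<Sum>p\<in>distinct_partitions n. (-1)^(size p - 1) * npow0 (Min (set_mset p)) k)"
    using assms by (intro sum.cong) (simp_all add: num_parts_def npow_smallest_part)
  also have "\<dots> = (\<Sum>p\<in>partitions n. \<Sum>j=0..card (set_mset p).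
      (-1)^j * of_nat (card (set_mset p) choose j) * npow0 (max_part p - j) k)"
    by (rule sum_distinct_partitions_eq_sum_partitions_binomial[where F = "\<lambda>m. npow0 m k"])
       (simp_all add: npow0_def assms)
  also have "\<dots> = (\<Sum>p\<in>partitions n. \<Sum>j=0..num_distinct_parts p.
            (-1) ^ j * of_nat (num_distinct_parts p choose j) *
            (if int (largest_part p) - int j = 0 then 0
             else npow (nat (int (largest_part p) - int j)) k))"
    unfolding num_distinct_parts_def using assms
    by (intro sum.cong refl) (simp only: atLeastAtMost_iff npow_largest_part_minus)
  finally show ?thesis .
qed

end
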